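(* Let $S$ be a $\Gamma$-AG$^{**}$-groupoid. Then $S$ is intra-regular if and only if every left $\Gamma$-ideal $L$ of $S$ is $\Gamma$-idempotent, i.e. $L\Gamma L=L$.
   Context: Let $S$ and $\Gamma$ be nonempty sets with a map $S\times\Gamma\times S\to S$, $(x,\gamma,y)\mapsto x\gamma y$. $S$ is a $\Gamma$-AG-groupoid if $(x\gamma y)\delta z=(z\gamma y)\delta x$ for all $x,y,z\in S$, $\gamma,\delta\in\Gamma$; it is a $\Gamma$-AG$^{**}$-groupoid if moreover $a\alpha(b\beta c)=b\alpha(a\beta c)$ for all $a,b,c\in S$, $\alpha,\beta\in\Gamma$. For subsets $A,B\subseteq S$, $A\Gamma B=\{a\gamma b: a\in A,\gamma\in\Gamma,b\in B\}$. $S$ is intra-regular if for every $a\in S$ there exist $x,y\in S$ and $\beta,\gamma,\delta\in\Gamma$ with $a=(x\beta(a\delta a))\gamma y$. A nonempty subset $L$ is a left $\Gamma$-ideal if $S\Gamma L\subseteq L$. *)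

theory Defs
  imports Main
begin

text \<open>A Gamma-groupoid: the carrier S is the type 'a, Gamma is the type 'g
  (types are nonempty), with ternary operation m x gamma y = x gamma y.\<close>

definition Gamma_AG_groupoid :: "('a \<Rightarrow> 'g \<Rightarrow> 'a \<Rightarrow> 'a) \<Rightarrow> bool" where
  "Gamma_AG_groupoid m \<longleftrightarrow>
     (\<forall>x y z \<gamma> \<delta>. m (m x \<gamma> y) \<delta> z = m (m z \<gamma> y) \<delta> x)"

definition Gamma_AG2_groupoid :: "('a \<Rightarrow> 'g \<Rightarrow> 'a \<Rightarrow> 'a) \<Rightarrow> bool" where
  "Gamma_AG2_groupoid m \<longleftrightarrow> Gamma_AG_groupoid m \<and>
     (\<forall>a b c \<alpha> \<beta>. m a \<alpha> (m b \<beta> c) = m b \<alpha> (m a \<beta> c))"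

definition GammaProd :: "('a \<Rightarrow> 'g \<Rightarrow> 'a \<Rightarrow> 'a) \<Rightarrow> 'a set \<Rightarrow> 'a set \<Rightarrow> 'a set" where
  "GammaProd m A B = {m a \<gamma> b | a \<gamma> b. a \<in> A \<and> b \<in> B}"

definition intra_regular :: "('a \<Rightarrow> 'g \<Rightarrow> 'a \<Rightarrow> 'a) \<Rightarrow> bool" where
  "intra_regular m \<longleftrightarrow>
     (\<forall>a. \<exists>x y \<beta> \<gamma> \<delta>. a = m (m x \<beta> (m a \<delta> a)) \<gamma> y)"

definition left_Gamma_ideal :: "('a \<Rightarrow> 'g \<Rightarrow> 'a \<Rightarrow> 'a) \<Rightarrow> 'a set \<Rightarrow> bool" where
  "left_Gamma_ideal m L \<longleftrightarrow> L \<noteq> {} \<and> GammaProd m UNIV L \<subseteq> L"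

end

theory Submission
  imports Defs
begin

(* Call a = (x\<beta>(a\<delta>a))\<gamma>y an intra-regular representation of a.
   (=>) If a lies in a left ideal L and has such a representation, the left
   invertive law and the AG** law rewrite it as a = (x\<beta>(y\<delta>a))\<gamma>a, a
   product of two elements of L; so L \<subseteq> L\<Gamma>L, and L\<Gamma>L \<subseteq> L holds for any
   left ideal.
   (<=) S itself is a left ideal, so S = S\<Gamma>S.  This makes {a} \<union> S\<Gamma>a a left
   ideal, hence idempotent, so a = p\<gamma>q with p, q \<in> {a} \<union> S\<Gamma>a.  In each of
   the four cases the two laws rewrite a as z\<gamma>(a\<delta>a) or as (a\<delta>a)\<gamma>s, and
   either shape yields an intra-regular representation. *)

definition intra_regular_at :: "('a \<Rightarrow> 'g \<Rightarrow> 'a \<Rightarrow> 'a) \<Rightarrow> 'a \<Rightarrow> bool" where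
  "intra_regular_at m a \<longleftrightarrow> (\<exists>x y \<beta> \<gamma> \<delta>. a = m (m x \<beta> (m a \<delta> a)) \<gamma> y)"

definition principal_left_ideal :: "('a \<Rightarrow> 'g \<Rightarrow> 'a \<Rightarrow> 'a) \<Rightarrow> 'a \<Rightarrow> 'a set" where
  "principal_left_ideal m a = insert a (GammaProd m UNIV {a})"

lemma principal_left_ideal_iff:
  "l \<in> principal_left_ideal m a \<longleftrightarrow> l = a \<or> (\<exists>t \<epsilon>. l = m t \<epsilon> a)"
  unfolding principal_left_ideal_def GammaProd_def by blast

lemma intra_regular_iff_at: "intra_regular m \<longleftrightarrow> (\<forall>a. intra_regular_at m a)"
  unfolding intra_regular_def intra_regular_at_def ..

lemma GammaProd_iff: "u \<in> GammaProd m A B \<longleftrightarrow> (\<exists>a \<gamma> b. u = m a \<gamma> b \<and> a \<in> A \<and> b \<in> B)"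
  unfolding GammaProd_def by blast

lemma GammaProdI: "a \<in> A \<Longrightarrow> b \<in> B \<Longrightarrow> m a \<gamma> b \<in> GammaProd m A B"
  unfolding GammaProd_iff by blast

lemma left_invertive:
  assumes "Gamma_AG_groupoid m"
  shows "m (m x \<gamma> y) \<delta> z = m (m z \<gamma> y) \<delta> x"
  using assms unfolding Gamma_AG_groupoid_def by blast

lemma AG2_imp_AG: "Gamma_AG2_groupoid m \<Longrightarrow> Gamma_AG_groupoid m"
  unfolding Gamma_AG2_groupoid_def by blast

lemma AG2_law:
  assumes "Gamma_AG2_groupoid m"
  shows "m a \<alpha> (m b \<beta> c) = m b \<alpha> (m a \<beta> c)"
  using assms unfolding Gamma_AG2_groupoid_def by blast

(* Shape 1: a = z\<gamma>(a\<delta>a) gives a witness, by substituting a into its own square. *)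
lemma intra_regular_at_right_square:
  assumes AG2: "Gamma_AG2_groupoid m" and a: "a = m z \<gamma> (m a \<delta> a)"
  shows "intra_regular_at m a"
proof -
  have LI: "Gamma_AG_groupoid m" using AG2 by (rule AG2_imp_AG)
  have sq: "m a \<delta> a = m (m a \<gamma> (m a \<delta> a)) \<delta> z"
  proof -
    have "m a \<delta> a = m (m z \<gamma> (m a \<delta> a)) \<delta> a"
      by (rule arg_cong[where f="\<lambda>u. m u \<delta> a", OF a])
    also have "\<dots> = m (m a \<gamma> (m a \<delta> a)) \<delta> z" by (rule left_invertive[OF LI])
    finally show ?thesis .
  qed
  have "a = m z \<gamma> (m a \<delta> a)" by (rule a)
  also have "\<dots> = m z \<gamma> (m (m a \<gamma> (m a \<delta> a)) \<delta> z)"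
    by (rule arg_cong[where f="m z \<gamma>", OF sq])
  also have "\<dots> = m (m a \<gamma> (m a \<delta> a)) \<gamma> (m z \<delta> z)" by (rule AG2_law[OF AG2])
  finally show ?thesis unfolding intra_regular_at_def by blast
qed

lemma intra_regular_at_left_square:
  assumes LI: "Gamma_AG_groupoid m" and a: "a = m (m a \<delta> a) \<gamma> s"
  shows "intra_regular_at m a"
proof -
  have sq: "m a \<delta> a = m (m a \<gamma> s) \<delta> (m a \<delta> a)"
  proof -
    have "m a \<delta> a = m (m (m a \<delta> a) \<gamma> s) \<delta> a"
      by (rule arg_cong[where f="\<lambda>u. m u \<delta> a", OF a])
    also have "\<dots> = m (m a \<gamma> s) \<delta> (m a \<delta> a)" by (rule left_invertive[OF LI])
    finally show ?thesis .
  qed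
  have "a = m (m a \<delta> a) \<gamma> s" by (rule a)
  also have "\<dots> = m (m (m a \<gamma> s) \<delta> (m a \<delta> a)) \<gamma> s"
    by (rule arg_cong[where f="\<lambda>u. m u \<gamma> s", OF sq])
  finally show ?thesis unfolding intra_regular_at_def by blast
qed

lemma left_ideal_closed:
  assumes "left_Gamma_ideal m L" and "l \<in> L"
  shows "m s \<gamma> l \<in> L"
  using assms unfolding left_Gamma_ideal_def GammaProd_def by blast

lemma left_ideal_square_subset:
  assumes "left_Gamma_ideal m L"
  shows "GammaProd m L L \<subseteq> L"
  using left_ideal_closed[OF assms] unfolding GammaProd_def by blast

lemma intra_regular_at_in_square:
  assumes AG2: "Gamma_AG2_groupoid m" and L: "left_Gamma_ideal m L"
    and aL: "a \<in> L" and reg: "intra_regular_at m a"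
  shows "a \<in> GammaProd m L L"
proof -
  have LI: "Gamma_AG_groupoid m" using AG2 by (rule AG2_imp_AG)
  obtain x y \<beta> \<gamma> \<delta> where a: "a = m (m x \<beta> (m a \<delta> a)) \<gamma> y"
    using reg unfolding intra_regular_at_def by blast
  also have "\<dots> = m (m y \<beta> (m a \<delta> a)) \<gamma> x" by (rule left_invertive[OF LI])
  also have "\<dots> = m (m a \<beta> (m y \<delta> a)) \<gamma> x" by (simp only: AG2_law[OF AG2, of y \<beta> a \<delta> a])
  also have "\<dots> = m (m x \<beta> (m y \<delta> a)) \<gamma> a" by (rule left_invertive[OF LI])
  finally have eq: "a = m (m x \<beta> (m y \<delta> a)) \<gamma> a" .
  have "m x \<beta> (m y \<delta> a) \<in> L" by (rule left_ideal_closed[OF L left_ideal_closed[OF L aL]])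
  then show ?thesis by (subst eq) (rule GammaProdI[OF _ aL])
qed

(* When every element is a product (S = S\<Gamma>S), {a} \<union> S\<Gamma>a is a left ideal:
   s\<delta>(t\<epsilon>a) with t = u\<gamma>v is rewritten to ((s\<epsilon>u)\<gamma>v)\<delta>a. *)
lemma principal_left_ideal_is_left_ideal:
  assumes AG2: "Gamma_AG2_groupoid m" and SS: "GammaProd m UNIV UNIV = UNIV"
  shows "left_Gamma_ideal m (principal_left_ideal m a)"
proof -
  have LI: "Gamma_AG_groupoid m" using AG2 by (rule AG2_imp_AG)
  have step: "m s \<delta> (m t \<epsilon> a) \<in> GammaProd m UNIV {a}" for s t \<delta> \<epsilon>
  proof -
    have "t \<in> GammaProd m UNIV UNIV" using SS by simp
    then obtain u \<gamma> v where t: "t = m u \<gamma> v" unfolding GammaProd_iff by blast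
    have "m s \<delta> (m t \<epsilon> a) = m s \<delta> (m (m a \<gamma> v) \<epsilon> u)"
      unfolding t by (rule arg_cong[OF left_invertive[OF LI]])
    also have "\<dots> = m (m a \<gamma> v) \<delta> (m s \<epsilon> u)" by (rule AG2_law[OF AG2])
    also have "\<dots> = m (m (m s \<epsilon> u) \<gamma> v) \<delta> a" by (rule left_invertive[OF LI])
    finally show ?thesis unfolding GammaProd_iff by blast
  qed
  have closed: "m s \<delta> l \<in> principal_left_ideal m a"
    if "l \<in> principal_left_ideal m a" for s \<delta> l
  proof -
    have "l = a \<or> (\<exists>t \<epsilon>. l = m t \<epsilon> a)"
      using that unfolding principal_left_ideal_iff .
    then have "m s \<delta> l \<in> GammaProd m UNIV {a}"
      using step unfolding GammaProd_iff by blast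
    then show ?thesis unfolding principal_left_ideal_def by blast
  qed
  have "GammaProd m UNIV (principal_left_ideal m a) \<subseteq> principal_left_ideal m a"
    using closed unfolding GammaProd_iff subset_iff by blast
  then show ?thesis
    unfolding left_Gamma_ideal_def principal_left_ideal_def by blast
qed

lemma intra_regular_at_from_principal_square:
  assumes AG2: "Gamma_AG2_groupoid m"
    and a: "a \<in> GammaProd m (principal_left_ideal m a) (principal_left_ideal m a)"
  shows "intra_regular_at m a"
proof -
  have LI: "Gamma_AG_groupoid m" using AG2 by (rule AG2_imp_AG)
  obtain p \<gamma> q where a: "a = m p \<gamma> q"
    and "p \<in> principal_left_ideal m a" "q \<in> principal_left_ideal m a"
    using a unfolding GammaProd_iff by blast
  then have p: "p = a \<or> (\<exists>s \<epsilon>. p = m s \<epsilon> a)" and q: "q = a \<or> (\<exists>t \<delta>. q = m t \<delta> a)"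
    unfolding principal_left_ideal_iff by blast+
  consider "p = a" "q = a" | t \<delta> where "p = a" "q = m t \<delta> a"
    | s \<epsilon> where "p = m s \<epsilon> a" "q = a" | s \<epsilon> t \<delta> where "p = m s \<epsilon> a" "q = m t \<delta> a"
    using p q by blast
  then show ?thesis
  proof cases
    case 1
    have idem_a: "m a \<gamma> a = a" using a unfolding 1 by (rule sym)
    have "a = m a \<gamma> (m a \<gamma> a)" by (simp only: idem_a)
    then show ?thesis by (rule intra_regular_at_right_square[OF AG2])
  next
    case (2 t \<delta>)
    have "a = m a \<gamma> (m t \<delta> a)" using a unfolding 2 .
    also have "\<dots> = m t \<gamma> (m a \<delta> a)" by (rule AG2_law[OF AG2])
    finally show ?thesis by (rule intra_regular_at_right_square[OF AG2])
  next
    case (3 s \<epsilon>)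
    have "a = m (m s \<epsilon> a) \<gamma> a" using a unfolding 3 .
    also have "\<dots> = m (m a \<epsilon> a) \<gamma> s" by (rule left_invertive[OF LI])
    finally show ?thesis by (rule intra_regular_at_left_square[OF LI])
  next
    case (4 s \<epsilon> t \<delta>)
    have "a = m (m s \<epsilon> a) \<gamma> (m t \<delta> a)" using a unfolding 4 .
    also have "\<dots> = m (m (m t \<delta> a) \<epsilon> a) \<gamma> s" by (rule left_invertive[OF LI])
    also have "\<dots> = m (m (m a \<delta> a) \<epsilon> t) \<gamma> s" by (simp only: left_invertive[OF LI, of t \<delta> a \<epsilon> a])
    also have "\<dots> = m (m s \<epsilon> t) \<gamma> (m a \<delta> a)" by (rule left_invertive[OF LI])
    finally show ?thesis by (rule intra_regular_at_right_square[OF AG2])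
  qed
qed

theorem mainTheorem12:
  fixes m :: "'a \<Rightarrow> 'g \<Rightarrow> 'a \<Rightarrow> 'a"
  assumes "Gamma_AG2_groupoid m"
  shows "intra_regular m \<longleftrightarrow>
           (\<forall>L. left_Gamma_ideal m L \<longrightarrow> GammaProd m L L = L)"
proof
  assume "intra_regular m"
  then have "L \<subseteq> GammaProd m L L" if "left_Gamma_ideal m L" for L
    using intra_regular_at_in_square[OF assms that] unfolding intra_regular_iff_at by blast
  then show "\<forall>L. left_Gamma_ideal m L \<longrightarrow> GammaProd m L L = L"
    using left_ideal_square_subset by blast
next
  assume idem: "\<forall>L. left_Gamma_ideal m L \<longrightarrow> GammaProd m L L = L"
  have "left_Gamma_ideal m UNIV" unfolding left_Gamma_ideal_def by simp
  with idem have SS: "GammaProd m UNIV UNIV = UNIV" by blast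
  have "intra_regular_at m a" for a
  proof -
    let ?L = "principal_left_ideal m a"
    have "GammaProd m ?L ?L = ?L"
      using idem principal_left_ideal_is_left_ideal[OF assms SS] by blast
    moreover have "a \<in> ?L" unfolding principal_left_ideal_def by blast
    ultimately show ?thesis using intra_regular_at_from_principal_square[OF assms] by simp
  qed
  then show "intra_regular m" unfolding intra_regular_iff_at by blast
qed

end
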